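(* Let $A$ be a finite-dimensional local $k$-algebra with $A/J_A\cong k$, $X$ a finite-dimensional $(A,k)$-bimodule (with central $k$-action), and $\Lambda:=\begin{pmatrix}A&X\\0&k\end{pmatrix}$. Assume $(1,-1)\in K_0(\operatorname{proj}\Lambda)$ is rigid. (a) There exists $h\in X$ with $X=Ah$. (b) Let $\Lambda':=\begin{pmatrix}A&J_AX\\0&k\end{pmatrix}$ and $t\ge1$. If $(1,-t)\in K_0(\operatorname{proj}\Lambda)$ is rigid, then $(1,1-t)\in K_0(\operatorname{proj}\Lambda')$ is rigid.
   Context: $k$ a field, $J_A$ the Jacobson radical. $K_0(\operatorname{proj}\Lambda)$ is identified with $\mathbb{Z}^2$ via $[A\ X]\mapsto(1,0)$, $[0\ k]\mapsto(0,1)$ (similarly for $\Lambda'$). An element of $K_0(\operatorname{proj}\Lambda)$ is rigid if it equals the $g$-vector $[T^0]-[T^{-1}]$ of some 2-term presilting complex $T$ in $K^b(\operatorname{proj}\Lambda)$ (concentrated in degrees $-1,0$ with $\operatorname{Hom}(T,T[\ell])=0$ for all $\ell>0$). *)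

theory Defs
  imports Main "HOL.Vector_Spaces"
begin

definition k_algebra :: "('k::field \<Rightarrow> 'a::ring_1 \<Rightarrow> 'a) \<Rightarrow> bool" where
  "k_algebra sA \<longleftrightarrow> vector_space sA \<and>
     (\<forall>c a b. sA c (a * b) = sA c a * b \<and> sA c (a * b) = a * sA c b)"

definition fin_dim :: "('k::field \<Rightarrow> 'b::ab_group_add \<Rightarrow> 'b) \<Rightarrow> bool" where
  "fin_dim s \<longleftrightarrow> vector_space s \<and> (\<exists>B. finite B \<and> module.span s B = UNIV)"

definition left_ideal :: "'a::ring_1 set \<Rightarrow> bool" where
  "left_ideal I \<longleftrightarrow> 0 \<in> I \<and> (\<forall>x\<in>I. \<forall>y\<in>I. x + y \<in> I) \<and> (\<forall>x\<in>I. - x \<in> I)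
     \<and> (\<forall>r. \<forall>x\<in>I. r * x \<in> I)"

definition maximal_left_ideal :: "'a::ring_1 set \<Rightarrow> bool" where
  "maximal_left_ideal I \<longleftrightarrow> left_ideal I \<and> I \<noteq> UNIV \<and>
     (\<forall>L. left_ideal L \<and> I \<subseteq> L \<longrightarrow> L = I \<or> L = UNIV)"

definition jacobson :: "'a::ring_1 set" where
  "jacobson = \<Inter> {I. maximal_left_ideal I}"

definition local_ring :: "'a::ring_1 itself \<Rightarrow> bool" where
  "local_ring _ \<longleftrightarrow> (\<exists>!I::'a set. maximal_left_ideal I)"

text \<open>A/J_A \<cong> k as k-algebras: the structure map k \<rightarrow> A/J_A, c \<mapsto> c\<cdot>1 + J_A, is bijective.\<close>
definition residue_field_is_k :: "('k::field \<Rightarrow> 'a::ring_1 \<Rightarrow> 'a) \<Rightarrow> bool" where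
  "residue_field_is_k sA \<longleftrightarrow> (\<forall>a. \<exists>!c. a - sA c 1 \<in> jacobson)"

text \<open>(A,k)-bimodule X with central k-action: X a k-vector space (sX = the k-action),
  actA a left A-module structure, and (c\<cdot>1_A) x = x c.\<close>
definition bimodule :: "('k::field \<Rightarrow> 'a::ring_1 \<Rightarrow> 'a) \<Rightarrow> ('k \<Rightarrow> 'x::ab_group_add \<Rightarrow> 'x)
    \<Rightarrow> ('a \<Rightarrow> 'x \<Rightarrow> 'x) \<Rightarrow> bool" where
  "bimodule sA sX actA \<longleftrightarrow> vector_space sX \<and>
     (\<forall>a b x. actA (a + b) x = actA a x + actA b x) \<and>
     (\<forall>a x y. actA a (x + y) = actA a x + actA a y) \<and>
     (\<forall>a b x. actA (a * b) x = actA a (actA b x)) \<and>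
     (\<forall>x. actA 1 x = x) \<and>
     (\<forall>c x. actA (sA c 1) x = sX c x)"

inductive_set JX :: "('a::ring_1 \<Rightarrow> 'x::ab_group_add \<Rightarrow> 'x) \<Rightarrow> 'x set" for actA where
  JX_zero: "0 \<in> JX actA"
| JX_gen: "a \<in> jacobson \<Longrightarrow> actA a x \<in> JX actA"
| JX_add: "u \<in> JX actA \<Longrightarrow> v \<in> JX actA \<Longrightarrow> u + v \<in> JX actA"

text \<open>For a sub-bimodule M \<subseteq> X (given as a set; M = X or M = J_A X) let
  \<Gamma> = (A M; 0 k), acting on right modules. proj \<Gamma> is Krull-Schmidt with indecomposables
  P1 = e1\<Gamma> = (A M) and P2 = e2\<Gamma> = (0 k), and Hom(P_i,P_j) = e_j \<Gamma> e_i: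
  Hom(P1,P1) = A, Hom(P2,P1) = M, Hom(P1,P2) = 0, Hom(P2,P2) = k.
  A morphism P1^a \<oplus> P2^b \<rightarrow> P1^a' \<oplus> P2^b' is a block matrix with an a'\<times>a block in A,
  an a'\<times>b block in M, and a b'\<times>b block in k; composition is matrix multiplication.\<close>

type_synonym ('a,'x,'k) tmor = "(nat \<Rightarrow> nat \<Rightarrow> 'a) \<times> (nat \<Rightarrow> nat \<Rightarrow> 'x) \<times> (nat \<Rightarrow> nat \<Rightarrow> 'k)"

definition is_mor :: "'x set \<Rightarrow> nat \<times> nat \<Rightarrow> nat \<times> nat \<Rightarrow> ('a,'x,'k) tmor \<Rightarrow> bool" where
  "is_mor M src tgt f \<longleftrightarrow> (\<forall>i<fst tgt. \<forall>j<snd src. fst (snd f) i j \<in> M)"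

definition mor_eq :: "nat \<times> nat \<Rightarrow> nat \<times> nat \<Rightarrow> ('a,'x,'k) tmor \<Rightarrow> ('a,'x,'k) tmor \<Rightarrow> bool" where
  "mor_eq src tgt f g \<longleftrightarrow>
     (\<forall>i<fst tgt. \<forall>j<fst src. fst f i j = fst g i j) \<and>
     (\<forall>i<fst tgt. \<forall>j<snd src. fst (snd f) i j = fst (snd g) i j) \<and>
     (\<forall>i<snd tgt. \<forall>j<snd src. snd (snd f) i j = snd (snd g) i j)"

text \<open>Composition f \<circ> g where g : src \<rightarrow> mid and f : mid \<rightarrow> tgt.\<close>
definition mor_comp :: "('k::field \<Rightarrow> 'x::ab_group_add \<Rightarrow> 'x) \<Rightarrow> ('a::ring_1 \<Rightarrow> 'x \<Rightarrow> 'x)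
    \<Rightarrow> nat \<times> nat \<Rightarrow> ('a,'x,'k) tmor \<Rightarrow> ('a,'x,'k) tmor \<Rightarrow> ('a,'x,'k) tmor" where
  "mor_comp sX actA mid f g =
     ((\<lambda>i j. \<Sum>l<fst mid. fst f i l * fst g l j),
      (\<lambda>i j. (\<Sum>l<fst mid. actA (fst f i l) (fst (snd g) l j))
           + (\<Sum>l<snd mid. sX (snd (snd g) l j) (fst (snd f) i l))),
      (\<lambda>i j. \<Sum>l<snd mid. snd (snd f) i l * snd (snd g) l j))"

definition mor_add :: "('a::ring_1,'x::ab_group_add,'k::field) tmor \<Rightarrow> ('a,'x,'k) tmor \<Rightarrow> ('a,'x,'k) tmor" where
  "mor_add f g = ((\<lambda>i j. fst f i j + fst g i j),
                  (\<lambda>i j. fst (snd f) i j + fst (snd g) i j),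
                  (\<lambda>i j. snd (snd f) i j + snd (snd g) i j))"

text \<open>A 2-term complex T = (T^{-1} \<rightarrow> T^0) with T^0 = P1^{a0} \<oplus> P2^{b0} (= t0),
  T^{-1} = P1^{a1} \<oplus> P2^{b1} (= t1) and differential d. It is presilting iff
  Hom_K(T,T[1]) = 0 (Hom(T,T[l]) = 0 for l \<ge> 2 holds automatically), i.e. every
  f : T^{-1} \<rightarrow> T^0 is null-homotopic: f = g \<circ> d + d \<circ> h for some
  g \<in> End(T^0), h \<in> End(T^{-1}).\<close>
definition presilting :: "('k::field \<Rightarrow> 'x::ab_group_add \<Rightarrow> 'x) \<Rightarrow> ('a::ring_1 \<Rightarrow> 'x \<Rightarrow> 'x)
    \<Rightarrow> 'x set \<Rightarrow> nat \<times> nat \<Rightarrow> nat \<times> nat \<Rightarrow> ('a,'x,'k) tmor \<Rightarrow> bool" where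
  "presilting sX actA M t0 t1 d \<longleftrightarrow> is_mor M t1 t0 d \<and>
     (\<forall>f. is_mor M t1 t0 f \<longrightarrow>
        (\<exists>g h. is_mor M t0 t0 g \<and> is_mor M t1 t1 h \<and>
           mor_eq t1 t0 f (mor_add (mor_comp sX actA t0 g d) (mor_comp sX actA t1 d h))))"

text \<open>(m,n) \<in> K_0(proj \<Gamma>) \<cong> \<int>^2 is rigid iff it is the g-vector [T^0]-[T^{-1}] of a
  2-term presilting complex T.\<close>
definition rigid :: "('k::field \<Rightarrow> 'x::ab_group_add \<Rightarrow> 'x) \<Rightarrow> ('a::ring_1 \<Rightarrow> 'x \<Rightarrow> 'x)
    \<Rightarrow> 'x set \<Rightarrow> int \<times> int \<Rightarrow> bool" where
  "rigid sX actA M v \<longleftrightarrow> (\<exists>t0 t1 (d::('a,'x,'k) tmor). presilting sX actA M t0 t1 d \<and>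
      fst v = int (fst t0) - int (fst t1) \<and> snd v = int (snd t0) - int (snd t1))"

end

(*
  Unipotent row and column operations on the differential, together with splitting off
  contractible summands P --id--> P, reduce every 2-term presilting complex to one with radical
  differential, and a radical presilting complex cannot have the same indecomposable projective in
  both degrees. Hence (1,-t) is rigid iff some T = (P2^t --y--> P1) is presilting, with y a tuple in
  X^t, and this means that every z in X^t is g y + y H for some g in A and H in k^(t x t).
  For t = 1 this is X = A y.
  For (b), X = A h is cyclic, so X / J_A X is at most one-dimensional over k. If all y_l lie in
  J_A X then X = J_A X, so X = 0 by Nakayama. Otherwise pick y_m outside J_A X and subtract from
  every y_l the multiple of y_m with the same residue: the remaining t - 1 entries lie in J_A X and
  satisfy the same condition over the algebra with bimodule J_A X, because k y_m meets J_A X in 0.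
*)

theory Submission
  imports Defs
begin

section \<open>Local rings\<close>

lemma left_ideal_Union_chain:
  assumes "C \<noteq> {}" and ideals: "\<And>L. L \<in> C \<Longrightarrow> left_ideal (L::'a::ring_1 set)"
    and chain: "\<And>K L. K \<in> C \<Longrightarrow> L \<in> C \<Longrightarrow> K \<subseteq> L \<or> L \<subseteq> K"
  shows "left_ideal (\<Union>C)"
  unfolding left_ideal_def
proof (intro conjI ballI allI)
  show "0 \<in> \<Union>C" using assms(1) ideals unfolding left_ideal_def by blast
next
  fix x y assume "x \<in> \<Union>C" "y \<in> \<Union>C"
  then obtain K L where "K \<in> C" "x \<in> K" "L \<in> C" "y \<in> L" by blast
  moreover from this have "K \<union> L \<in> C" using chain by (metis sup.absorb1 sup.absorb2)
  ultimately show "x + y \<in> \<Union>C" using ideals[of "K \<union> L"] unfolding left_ideal_def by blast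
qed (use ideals in \<open>(simp add: left_ideal_def, blast)+\<close>)

locale local_ring_type =
  fixes ring_type :: "'a::ring_1 itself"
  assumes local_ring: "local_ring ring_type"
begin

abbreviation J :: "'a set" where "J \<equiv> jacobson"

lemma jacobson_eq_maximal: "maximal_left_ideal I \<Longrightarrow> J = I"
  using local_ring unfolding local_ring_def jacobson_def
  by (metis (mono_tags) cInf_singleton mem_Collect_eq singletonI subsetI subset_singletonD empty_iff)

lemma maximal_left_ideal_jacobson: "maximal_left_ideal J"
  using local_ring jacobson_eq_maximal unfolding local_ring_def by metis

lemma left_ideal_jacobson: "left_ideal J"
  using maximal_left_ideal_jacobson unfolding maximal_left_ideal_def by blast

lemma jacobson_0: "0 \<in> J"
  and jacobson_add: "x \<in> J \<Longrightarrow> y \<in> J \<Longrightarrow> x + y \<in> J"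
  and jacobson_uminus: "x \<in> J \<Longrightarrow> - x \<in> J"
  and jacobson_mult_left: "x \<in> J \<Longrightarrow> r * x \<in> J"
  using left_ideal_jacobson unfolding left_ideal_def by blast+

lemma jacobson_sum: "(\<And>l. l < (n::nat) \<Longrightarrow> F l \<in> J) \<Longrightarrow> (\<Sum>l<n. F l) \<in> J"
  by (induct n) (auto intro: jacobson_add simp: jacobson_0)

lemma one_not_in_jacobson: "1 \<notin> J"
proof
  assume "1 \<in> J"
  then have "J = UNIV" using jacobson_mult_left[of 1] by (metis UNIV_eq_I mult.right_neutral)
  with maximal_left_ideal_jacobson show False unfolding maximal_left_ideal_def by blast
qed

lemma proper_left_ideal_subset_jacobson:
  assumes L: "left_ideal L" and "1 \<notin> L"
  shows "L \<subseteq> J"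
proof -
  let ?F = "{K. left_ideal K \<and> L \<subseteq> K \<and> 1 \<notin> K}"
  have "\<exists>M\<in>?F. \<forall>K\<in>?F. M \<subseteq> K \<longrightarrow> K = M"
  proof (rule subset_Zorn_nonempty)
    show "?F \<noteq> {}" using assms by blast
    fix C assume "C \<noteq> {}" and "subset.chain ?F C"
    then show "\<Union>C \<in> ?F"
      using left_ideal_Union_chain[of C] unfolding subset.chain_def by blast
  qed
  then obtain M where M: "M \<in> ?F" and max: "\<forall>K\<in>?F. M \<subseteq> K \<longrightarrow> K = M" by blast
  have "maximal_left_ideal M" unfolding maximal_left_ideal_def
  proof (intro conjI allI impI)
    show "left_ideal M" "M \<noteq> UNIV" using M by auto
    fix K assume K: "left_ideal K \<and> M \<subseteq> K"
    show "K = M \<or> K = UNIV"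
    proof (cases "1 \<in> K")
      case True
      then have "r \<in> K" for r using K unfolding left_ideal_def by (metis mult.right_neutral)
      then show ?thesis by blast
    qed (use K M max in blast)
  qed
  then show ?thesis using M jacobson_eq_maximal by blast
qed

lemma left_invertible_if_not_in_jacobson:
  assumes "x \<notin> J" shows "\<exists>u. u * x = 1"
proof (rule ccontr)
  assume no_inverse: "\<nexists>u. u * x = 1"
  let ?L = "range (\<lambda>r. r * x)"
  have "left_ideal ?L" unfolding left_ideal_def
  proof (intro conjI ballI allI)
    show "0 \<in> ?L" by (metis mult_zero_left rangeI)
    fix a b q assume "a \<in> ?L" "b \<in> ?L"
    then obtain r s where "a = r * x" "b = s * x" by blast
    then show "a + b \<in> ?L" "- a \<in> ?L" "q * a \<in> ?L"
      by (metis distrib_right rangeI, metis minus_mult_left rangeI, metis mult.assoc rangeI)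
  qed
  moreover have "1 \<notin> ?L" using no_inverse by (metis rangeE)
  ultimately have "?L \<subseteq> J" by (rule proper_left_ideal_subset_jacobson)
  moreover have "x \<in> ?L" by (metis mult_1 rangeI)
  ultimately show False using assms by blast
qed

lemma jacobson_mult_right:
  assumes j: "j \<in> J" shows "j * a \<in> J"
proof (rule ccontr)
  assume "j * a \<notin> J"
  then obtain u where "u * (j * a) = 1" using left_invertible_if_not_in_jacobson by blast
  moreover define b where "b = u * j"
  ultimately have ba: "b * a = 1" by (simp add: mult.assoc)
  have "b \<in> J" using j jacobson_mult_left b_def by simp
  then have "1 - a * b \<notin> J"
    using jacobson_add[of "1 - a * b" "a * b"] jacobson_mult_left one_not_in_jacobson by auto
  then obtain w where w: "w * (1 - a * b) = 1" using left_invertible_if_not_in_jacobson by blast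
  have "(1 - a * b) * a = 0" by (simp add: algebra_simps mult.assoc[symmetric] ba)
  then have "w * ((1 - a * b) * a) = 0" by simp
  then have "a = 0" using w by (simp add: mult.assoc[symmetric])
  then show False using ba by simp
qed

lemma invertible_if_not_in_jacobson:
  assumes "x \<notin> J" shows "\<exists>v. v * x = 1 \<and> x * v = 1"
proof -
  obtain u where u: "u * x = 1" using left_invertible_if_not_in_jacobson assms by blast
  have "u \<notin> J" using jacobson_mult_right u one_not_in_jacobson by metis
  then obtain c where c: "c * u = 1" using left_invertible_if_not_in_jacobson by blast
  have "c = c * (u * x)" using u by simp
  also have "\<dots> = x" using c by (simp add: mult.assoc[symmetric])
  finally show ?thesis using u c by blast
qed

end

section \<open>Morphisms between projective modules over the triangular algebra\<close>

definition mor_id :: "('a::ring_1,'x::ab_group_add,'k::field) tmor" where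
  "mor_id = ((\<lambda>i j. if i = j then 1 else 0), (\<lambda>i j. 0), (\<lambda>i j. if i = j then 1 else 0))"

definition mor_zero :: "('a::ring_1,'x::ab_group_add,'k::field) tmor" where
  "mor_zero = ((\<lambda>i j. 0), (\<lambda>i j. 0), (\<lambda>i j. 0))"

definition mor_neg :: "('a::ring_1,'x::ab_group_add,'k::field) tmor \<Rightarrow> ('a,'x,'k) tmor" where
  "mor_neg f = ((\<lambda>i j. - fst f i j), (\<lambda>i j. - fst (snd f) i j), (\<lambda>i j. - snd (snd f) i j))"

lemma mor_eq_refl: "mor_eq s t f f"
  and mor_eq_sym: "mor_eq s t f g \<Longrightarrow> mor_eq s t g f"
  and mor_eq_trans [trans]: "mor_eq s t f g \<Longrightarrow> mor_eq s t g h \<Longrightarrow> mor_eq s t f h"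
  and mor_eq_add: "mor_eq s t f f' \<Longrightarrow> mor_eq s t g g' \<Longrightarrow> mor_eq s t (mor_add f g) (mor_add f' g')"
  and mor_eq_neg: "mor_eq s t f f' \<Longrightarrow> mor_eq s t (mor_neg f) (mor_neg f')"
  unfolding mor_eq_def mor_add_def mor_neg_def by simp_all

lemma sum_lessThan_delta: "(\<Sum>l<(n::nat). if i = l then F l else 0) = (if i < n then F i else 0)"
  and sum_lessThan_delta': "(\<Sum>l<(n::nat). if l = i then F l else 0) = (if i < n then F i else 0)"
  by (induct n) auto

locale local_bimodule =
  fixes sA :: "'k::field \<Rightarrow> 'a::ring_1 \<Rightarrow> 'a"
    and sX :: "'k \<Rightarrow> 'x::ab_group_add \<Rightarrow> 'x"
    and actA :: "'a \<Rightarrow> 'x \<Rightarrow> 'x"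
  assumes k_algebra: "k_algebra sA" and local_ring: "local_ring TYPE('a)"
    and residue_field: "residue_field_is_k sA" and bimodule: "bimodule sA sX actA"
begin

sublocale local_ring_type "TYPE('a)" using local_ring by unfold_locales

abbreviation \<iota> :: "'k \<Rightarrow> 'a" where "\<iota> c \<equiv> sA c 1"

lemma scale_mult_left: "sA c (a * b) = sA c a * b" and scale_mult_right: "sA c (a * b) = a * sA c b"
  using k_algebra unfolding k_algebra_def by blast+

lemma scale_add_scalar: "sA (c + d) a = sA c a + sA d a"
  and scale_scale: "sA c (sA d a) = sA (c * d) a" and scale_one: "sA 1 a = a"
  using k_algebra unfolding k_algebra_def vector_space_def by blast+

lemma \<iota>_central: "\<iota> c * a = a * \<iota> c"
  using scale_mult_left[of c 1 a] scale_mult_right[of c a 1] by simp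

lemma \<iota>_add: "\<iota> (c + d) = \<iota> c + \<iota> d"
  and \<iota>_one: "\<iota> 1 = 1"
  using scale_add_scalar scale_one by blast+

lemma \<iota>_mult: "\<iota> (c * d) = \<iota> c * \<iota> d"
  using scale_scale[of c d 1] scale_mult_left[of c 1 "\<iota> d"] by simp

lemma \<iota>_zero: "\<iota> 0 = 0"
  using \<iota>_add[of 0 0] by simp

lemma \<iota>_uminus: "\<iota> (- c) = - \<iota> c"
  using \<iota>_add[of c "- c"] \<iota>_zero by (simp add: add.inverse_unique)

lemma \<iota>_diff: "\<iota> (c - d) = \<iota> c - \<iota> d"
  using \<iota>_add[of c "- d"] \<iota>_uminus[of d] by simp

lemma \<iota>_sum: "\<iota> (\<Sum>l\<in>S. f l) = (\<Sum>l\<in>S. \<iota> (f l))"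
  by (induction S rule: infinite_finite_induct) (simp_all add: \<iota>_zero \<iota>_add)

lemma act_add_left: "actA (a + b) x = actA a x + actA b x"
  and act_add_right: "actA a (x + y) = actA a x + actA a y"
  and act_mult: "actA (a * b) x = actA a (actA b x)"
  and act_one: "actA 1 x = x"
  and scaleX_eq_act: "sX c x = actA (\<iota> c) x"
  using bimodule unfolding bimodule_def by simp_all

lemma act_zero_left [simp]: "actA 0 x = 0"
  using act_add_left[of 0 0 x] by simp

lemma act_zero_right [simp]: "actA a 0 = 0"
  using act_add_right[of a 0 0] by simp

lemma act_uminus_left: "actA (- a) x = - actA a x"
  using act_add_left[of a "- a" x] by (simp add: add.inverse_unique)

lemma act_uminus_right: "actA a (- x) = - actA a x"
  using act_add_right[of a x "- x"] by (simp add: add.inverse_unique)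

lemma act_diff_left: "actA (a - b) x = actA a x - actA b x"
  using act_add_left[of a "- b" x] act_uminus_left[of b x] by simp

lemma act_diff_right: "actA a (x - y) = actA a x - actA a y"
  using act_add_right[of a x "- y"] act_uminus_right[of a y] by simp

lemma act_sum_left: "actA (\<Sum>l\<in>S. f l) x = (\<Sum>l\<in>S. actA (f l) x)"
  by (induction S rule: infinite_finite_induct) (simp_all add: act_add_left)

lemma act_sum_right: "actA a (\<Sum>l\<in>S. f l) = (\<Sum>l\<in>S. actA a (f l))"
  by (induction S rule: infinite_finite_induct) (simp_all add: act_add_right)

lemma act_\<iota>_commute: "actA (\<iota> c) (actA a x) = actA a (actA (\<iota> c) x)"
  by (simp add: act_mult[symmetric] \<iota>_central)

lemma act_\<iota>_\<iota>: "actA (\<iota> c) (actA (\<iota> d) x) = actA (\<iota> (d * c)) x"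
  by (simp add: act_mult[symmetric] \<iota>_mult[symmetric] mult.commute)

abbreviation cmp :: "nat \<times> nat \<Rightarrow> ('a,'x,'k) tmor \<Rightarrow> ('a,'x,'k) tmor \<Rightarrow> ('a,'x,'k) tmor"
  where "cmp \<equiv> mor_comp sX actA"

lemma cmp_A: "fst (cmp m f g) = (\<lambda>i j. \<Sum>l<fst m. fst f i l * fst g l j)"
  unfolding mor_comp_def by simp

lemma cmp_X: "fst (snd (cmp m f g)) = (\<lambda>i j. (\<Sum>l<fst m. actA (fst f i l) (fst (snd g) l j))
           + (\<Sum>l<snd m. actA (\<iota> (snd (snd g) l j)) (fst (snd f) i l)))"
  unfolding mor_comp_def by (simp add: scaleX_eq_act)

lemma cmp_k: "snd (snd (cmp m f g)) = (\<lambda>i j. \<Sum>l<snd m. snd (snd f) i l * snd (snd g) l j)"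
  unfolding mor_comp_def by simp

lemma cmp_assoc: "cmp m1 (cmp m2 f g) h = cmp m2 f (cmp m1 g h)"
proof -
  obtain fA fX fk where f: "f = (fA, fX, fk)" by (cases f) auto
  obtain gA gX gk where g: "g = (gA, gX, gk)" by (cases g) auto
  obtain hA hX hk where h: "h = (hA, hX, hk)" by (cases h) auto
  have A: "(\<Sum>l<fst m1. (\<Sum>p<fst m2. fA i p * gA p l) * hA l j) =
           (\<Sum>p<fst m2. fA i p * (\<Sum>l<fst m1. gA p l * hA l j))" for i j
    by (simp add: sum_distrib_left sum_distrib_right mult.assoc) (rule sum.swap)
  have K: "(\<Sum>l<snd m1. (\<Sum>p<snd m2. fk i p * gk p l) * hk l j) =
           (\<Sum>p<snd m2. fk i p * (\<Sum>l<snd m1. gk p l * hk l j))" for i j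
    by (simp add: sum_distrib_left sum_distrib_right mult.assoc) (rule sum.swap)
  have X1: "(\<Sum>l<fst m1. actA (\<Sum>p<fst m2. fA i p * gA p l) (hX l j)) =
            (\<Sum>p<fst m2. actA (fA i p) (\<Sum>l<fst m1. actA (gA p l) (hX l j)))" for i j
    by (simp add: act_sum_left act_sum_right act_mult) (rule sum.swap)
  have X2: "(\<Sum>l<snd m1. actA (\<iota> (hk l j)) (\<Sum>p<fst m2. actA (fA i p) (gX p l))) =
            (\<Sum>p<fst m2. actA (fA i p) (\<Sum>l<snd m1. actA (\<iota> (hk l j)) (gX p l)))" for i j
    by (simp add: act_sum_left act_sum_right act_\<iota>_commute) (rule sum.swap)
  have X3: "(\<Sum>l<snd m1. actA (\<iota> (hk l j)) (\<Sum>p<snd m2. actA (\<iota> (gk p l)) (fX i p))) =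
            (\<Sum>p<snd m2. actA (\<iota> (\<Sum>l<snd m1. gk p l * hk l j)) (fX i p))" for i j
    by (simp add: act_sum_left act_sum_right act_\<iota>_\<iota> \<iota>_sum) (rule sum.swap)
  have "fst (cmp m1 (cmp m2 f g) h) = fst (cmp m2 f (cmp m1 g h))"
    unfolding cmp_A f g h using A by simp
  moreover have "snd (snd (cmp m1 (cmp m2 f g) h)) = snd (snd (cmp m2 f (cmp m1 g h)))"
    unfolding cmp_k f g h using K by simp
  moreover have "fst (snd (cmp m1 (cmp m2 f g) h)) = fst (snd (cmp m2 f (cmp m1 g h)))"
    unfolding cmp_X cmp_A cmp_k f g h fst_conv snd_conv
    by (simp only: act_add_right sum.distrib X1 X2 X3 add.assoc)
  ultimately show ?thesis by (simp add: prod_eq_iff)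
qed

lemma cmp_add_right: "cmp m f (mor_add g1 g2) = mor_add (cmp m f g1) (cmp m f g2)"
  and cmp_add_left: "cmp m (mor_add f1 f2) g = mor_add (cmp m f1 g) (cmp m f2 g)"
  unfolding mor_comp_def mor_add_def
  by (simp_all add: scaleX_eq_act act_add_right \<iota>_add act_add_left sum.distrib algebra_simps)

lemma cmp_neg_right: "cmp m f (mor_neg g) = mor_neg (cmp m f g)"
  and cmp_neg_left: "cmp m (mor_neg f) g = mor_neg (cmp m f g)"
  unfolding mor_comp_def mor_neg_def
  by (simp_all add: scaleX_eq_act act_uminus_right act_uminus_left \<iota>_uminus sum_negf)

lemmas elementary_op_simps = sum.distrib sum_lessThan_delta sum_lessThan_delta' \<iota>_zero \<iota>_one act_one
  if_distrib[of "\<lambda>a. a * b" for b] if_distrib[of "\<lambda>b. a * b" for a]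
  if_distrib[of \<iota>] if_distrib[of "\<lambda>a. actA a x" for x] if_distrib[of "actA a" for a]

lemma cmp_id_left: "mor_eq src m (cmp m mor_id g) g"
  unfolding mor_eq_def cmp_A cmp_X cmp_k mor_id_def fst_conv snd_conv
  by (simp add: elementary_op_simps cong: if_cong)

lemma cmp_id_right: "mor_eq src tgt (cmp src g mor_id) g"
  unfolding mor_eq_def cmp_A cmp_X cmp_k mor_id_def fst_conv snd_conv
  by (simp add: elementary_op_simps cong: if_cong)

lemma cmp_cong:
  "mor_eq m tgt f f' \<Longrightarrow> mor_eq src m g g' \<Longrightarrow> mor_eq src tgt (cmp m f g) (cmp m f' g')"
  unfolding mor_eq_def cmp_A cmp_X cmp_k
  by (auto intro!: sum.cong arg_cong2[where f="(+)"])


lemma presilting_UNIV_iff: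
  "presilting sX actA UNIV t0 t1 d \<longleftrightarrow>
     (\<forall>f. \<exists>g h. mor_eq t1 t0 f (mor_add (cmp t0 g d) (cmp t1 d h)))"
  by (simp add: presilting_def is_mor_def)

lemma presilting_iso_comp:
  assumes P: "presilting sX actA UNIV t0 t1 d"
    and inv: "mor_eq t0 t0 (cmp t0 L L') mor_id" "mor_eq t0 t0 (cmp t0 L' L) mor_id"
  shows "presilting sX actA UNIV t0 t1 (cmp t0 L d)"
  unfolding presilting_UNIV_iff
proof
  fix f
  obtain g h where gh: "mor_eq t1 t0 (cmp t0 L' f) (mor_add (cmp t0 g d) (cmp t1 d h))"
    using P unfolding presilting_UNIV_iff by blast
  have "mor_eq t1 t0 (cmp t0 L (cmp t0 g d)) (cmp t0 (cmp t0 L g) (cmp t0 mor_id d))"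
    using cmp_cong[OF mor_eq_refl[of _ _ "cmp t0 L g"] mor_eq_sym[OF cmp_id_left[of t1 t0 d]]]
    by (simp add: cmp_assoc)
  also have "mor_eq t1 t0 \<dots> (cmp t0 (cmp t0 (cmp t0 L g) L') (cmp t0 L d))"
    using cmp_cong[OF mor_eq_refl[of t0 t0 "cmp t0 L g"] cmp_cong[OF mor_eq_sym[OF inv(2)] mor_eq_refl[of t1 t0 d]]]
    by (simp add: cmp_assoc)
  finally have homotopy_g: "mor_eq t1 t0 (cmp t0 L (cmp t0 g d))
      (cmp t0 (cmp t0 (cmp t0 L g) L') (cmp t0 L d))" .
  have "mor_eq t1 t0 f (cmp t0 L (cmp t0 L' f))"
    using mor_eq_trans[OF mor_eq_sym[OF cmp_id_left[of t1 t0 f]]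
        cmp_cong[OF mor_eq_sym[OF inv(1)] mor_eq_refl[of t1 t0 f]]]
    by (simp add: cmp_assoc)
  also have "mor_eq t1 t0 \<dots> (mor_add (cmp t0 L (cmp t0 g d)) (cmp t1 (cmp t0 L d) h))"
    using cmp_cong[OF mor_eq_refl[of t0 t0 L] gh] by (simp add: cmp_add_right cmp_assoc)
  also have "mor_eq t1 t0 \<dots> (mor_add (cmp t0 (cmp t0 (cmp t0 L g) L') (cmp t0 L d)) (cmp t1 (cmp t0 L d) h))"
    by (intro mor_eq_add homotopy_g mor_eq_refl)
  finally show "\<exists>g h. mor_eq t1 t0 f (mor_add (cmp t0 g (cmp t0 L d)) (cmp t1 (cmp t0 L d) h))"
    by blast
qed

lemma presilting_comp_iso:
  assumes P: "presilting sX actA UNIV t0 t1 d"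
    and inv: "mor_eq t1 t1 (cmp t1 R R') mor_id" "mor_eq t1 t1 (cmp t1 R' R) mor_id"
  shows "presilting sX actA UNIV t0 t1 (cmp t1 d R)"
  unfolding presilting_UNIV_iff
proof
  fix f
  obtain g h where gh: "mor_eq t1 t0 (cmp t1 f R') (mor_add (cmp t0 g d) (cmp t1 d h))"
    using P unfolding presilting_UNIV_iff by blast
  have "mor_eq t1 t0 (cmp t1 (cmp t1 d h) R) (cmp t1 (cmp t1 d mor_id) (cmp t1 h R))"
    using cmp_cong[OF mor_eq_sym[OF cmp_id_right[of t1 t0 d]] mor_eq_refl[of _ _ "cmp t1 h R"]]
    by (simp add: cmp_assoc)
  also have "mor_eq t1 t0 \<dots> (cmp t1 (cmp t1 d R) (cmp t1 R' (cmp t1 h R)))"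
    using cmp_cong[OF cmp_cong[OF mor_eq_refl[of t1 t0 d] mor_eq_sym[OF inv(1)]] mor_eq_refl[of t1 t1 "cmp t1 h R"]]
    by (simp add: cmp_assoc)
  finally have homotopy_h: "mor_eq t1 t0 (cmp t1 (cmp t1 d h) R)
      (cmp t1 (cmp t1 d R) (cmp t1 R' (cmp t1 h R)))" .
  have "mor_eq t1 t0 f (cmp t1 (cmp t1 f R') R)"
    using mor_eq_trans[OF mor_eq_sym[OF cmp_id_right[of t1 t0 f]]
        cmp_cong[OF mor_eq_refl[of t1 t0 f] mor_eq_sym[OF inv(2)]]]
    by (simp add: cmp_assoc)
  also have "mor_eq t1 t0 \<dots> (mor_add (cmp t0 g (cmp t1 d R)) (cmp t1 (cmp t1 d h) R))"
    using cmp_cong[OF gh mor_eq_refl[of t1 t1 R]] by (simp add: cmp_add_left cmp_assoc)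
  also have "mor_eq t1 t0 \<dots> (mor_add (cmp t0 g (cmp t1 d R)) (cmp t1 (cmp t1 d R) (cmp t1 R' (cmp t1 h R))))"
    by (intro mor_eq_add homotopy_h mor_eq_refl)
  finally show "\<exists>g h. mor_eq t1 t0 f (mor_add (cmp t0 g (cmp t1 d R)) (cmp t1 (cmp t1 d R) h))"
    by blast
qed

lemma mor_unipotent_inverse:
  assumes NN: "mor_eq t t (cmp t N N) mor_zero"
  shows "mor_eq t t (cmp t (mor_add mor_id N) (mor_add mor_id (mor_neg N))) mor_id"
    and "mor_eq t t (cmp t (mor_add mor_id (mor_neg N)) (mor_add mor_id N)) mor_id"
proof -
  have NN': "mor_eq t t (cmp t N (mor_neg N)) (mor_neg mor_zero)"
    "mor_eq t t (cmp t (mor_neg N) N) (mor_neg mor_zero)"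
    using NN by (simp_all add: cmp_neg_right cmp_neg_left mor_eq_neg)
  have "mor_eq t t (cmp t (mor_add mor_id N) (mor_add mor_id (mor_neg N)))
     (mor_add (mor_add mor_id N) (mor_add (mor_neg N) (mor_neg mor_zero)))"
    unfolding cmp_add_left cmp_add_right by (intro mor_eq_add cmp_id_left cmp_id_right NN')
  also have "mor_eq t t \<dots> mor_id"
    unfolding mor_eq_def mor_add_def mor_neg_def mor_zero_def by simp
  finally show "mor_eq t t (cmp t (mor_add mor_id N) (mor_add mor_id (mor_neg N))) mor_id" .
  have "mor_eq t t (cmp t (mor_add mor_id (mor_neg N)) (mor_add mor_id N))
     (mor_add (mor_add mor_id (mor_neg N)) (mor_add N (mor_neg mor_zero)))"
    unfolding cmp_add_left cmp_add_right by (intro mor_eq_add cmp_id_left cmp_id_right NN')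
  also have "mor_eq t t \<dots> mor_id"
    unfolding mor_eq_def mor_add_def mor_neg_def mor_zero_def by simp
  finally show "mor_eq t t (cmp t (mor_add mor_id (mor_neg N)) (mor_add mor_id N)) mor_id" .
qed

lemma presilting_unipotent_comp:
  assumes "presilting sX actA UNIV t0 t1 d" and "mor_eq t0 t0 (cmp t0 N N) mor_zero"
  shows "presilting sX actA UNIV t0 t1 (cmp t0 (mor_add mor_id N) d)"
  using presilting_iso_comp[OF assms(1) mor_unipotent_inverse[OF assms(2)]] .

lemma presilting_comp_unipotent:
  assumes "presilting sX actA UNIV t0 t1 d" and "mor_eq t1 t1 (cmp t1 N N) mor_zero"
  shows "presilting sX actA UNIV t0 t1 (cmp t1 d (mor_add mor_id N))"
  using presilting_comp_iso[OF assms(1) mor_unipotent_inverse[OF assms(2)]] .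

end

section \<open>Reduction to radical complexes\<close>

definition skip :: "nat \<Rightarrow> nat \<Rightarrow> nat" where "skip p i = (if i < p then i else Suc i)"
definition unskip :: "nat \<Rightarrow> nat \<Rightarrow> nat" where "unskip p i = (if i < p then i else i - 1)"

lemma unskip_skip[simp]: "unskip p (skip p i) = i" unfolding skip_def unskip_def by auto
lemma skip_neq[simp]: "skip p i \<noteq> p" unfolding skip_def by auto
lemma skip_less: "p < n \<Longrightarrow> i < n - 1 \<Longrightarrow> skip p i < n" unfolding skip_def by auto

lemma sum_skip:
  assumes "p < (n::nat)"
  shows "(\<Sum>l<n. F l) = F p + (\<Sum>l<n - 1. F (skip p l))"
proof -
  have bij: "bij_betw (skip p) {..<n - 1} ({..<n} - {p})"
    by (rule bij_betw_byWitness[where f' = "unskip p"]) (use assms in \<open>auto simp: skip_def unskip_def\<close>)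
  have "(\<Sum>l<n. F l) = F p + (\<Sum>l\<in>{..<n} - {p}. F l)"
    using assms by (simp add: sum.remove)
  also have "(\<Sum>l\<in>{..<n} - {p}. F l) = (\<Sum>l<n - 1. F (skip p l))"
    using sum.reindex_bij_betw[OF bij, of F] by simp
  finally show ?thesis .
qed

definition radical_mor :: "nat \<times> nat \<Rightarrow> nat \<times> nat \<Rightarrow> ('a::ring_1,'x,'k::zero) tmor \<Rightarrow> bool"
  where "radical_mor src tgt d \<longleftrightarrow>
     (\<forall>i<fst tgt. \<forall>j<fst src. fst d i j \<in> jacobson) \<and>
     (\<forall>i<snd tgt. \<forall>j<snd src. snd (snd d) i j = 0)"

definition mor_drop_A :: "nat \<Rightarrow> nat \<Rightarrow> ('a,'x,'k) tmor \<Rightarrow> ('a,'x,'k) tmor" where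
  "mor_drop_A p q f = ((\<lambda>i j. fst f (skip p i) (skip q j)), (\<lambda>i j. fst (snd f) (skip p i) j), snd (snd f))"

definition mor_drop_k :: "nat \<Rightarrow> nat \<Rightarrow> ('a,'x,'k) tmor \<Rightarrow> ('a,'x,'k) tmor" where
  "mor_drop_k p q f = (fst f, (\<lambda>i j. fst (snd f) i (skip q j)), (\<lambda>i j. snd (snd f) (skip p i) (skip q j)))"

lemma mor_eq_drop_A:
  "i0 < a0 \<Longrightarrow> j0 < a1 \<Longrightarrow> mor_eq (a1, b1) (a0, b0) f g \<Longrightarrow>
   mor_eq (a1 - 1, b1) (a0 - 1, b0) (mor_drop_A i0 j0 f) (mor_drop_A i0 j0 g)"
  unfolding mor_eq_def mor_drop_A_def by (simp add: skip_less)

lemma mor_eq_drop_k: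
  "i0 < b0 \<Longrightarrow> j0 < b1 \<Longrightarrow> mor_eq (a1, b1) (a0, b0) f g \<Longrightarrow>
   mor_eq (a1, b1 - 1) (a0, b0 - 1) (mor_drop_k i0 j0 f) (mor_drop_k i0 j0 g)"
  unfolding mor_eq_def mor_drop_k_def by (simp add: skip_less)

context local_bimodule
begin

lemma cmp_drop_A:
  assumes i0: "i0 < a0" and j0: "j0 < a1"
    and row_A: "\<forall>j<a1. j \<noteq> j0 \<longrightarrow> fst d i0 j = 0" and row_X: "\<forall>j<b1. fst (snd d) i0 j = 0"
    and col_A: "\<forall>i<a0. i \<noteq> i0 \<longrightarrow> fst d i j0 = 0"
  shows "mor_eq (a1 - 1, b1) (a0 - 1, b0)
    (mor_drop_A i0 j0 (mor_add (cmp (a0, b0) g d) (cmp (a1, b1) d h)))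
    (mor_add (cmp (a0 - 1, b0) (mor_drop_A i0 i0 g) (mor_drop_A i0 j0 d))
       (cmp (a1 - 1, b1) (mor_drop_A i0 j0 d) (mor_drop_A j0 j0 h)))"
  unfolding mor_eq_def
proof (intro conjI allI impI)
  fix i j assume "i < fst (a0 - 1, b0)" "j < fst (a1 - 1, b1)"
  then have "skip i0 i < a0" "skip j0 j < a1" using i0 j0 skip_less by auto
  then have "fst d i0 (skip j0 j) = 0" "fst d (skip i0 i) j0 = 0" using row_A col_A by auto
  then show "fst (mor_drop_A i0 j0 (mor_add (cmp (a0, b0) g d) (cmp (a1, b1) d h))) i j =
    fst (mor_add (cmp (a0 - 1, b0) (mor_drop_A i0 i0 g) (mor_drop_A i0 j0 d))
       (cmp (a1 - 1, b1) (mor_drop_A i0 j0 d) (mor_drop_A j0 j0 h))) i j"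
    unfolding mor_drop_A_def mor_add_def cmp_A by (simp add: sum_skip[OF i0] sum_skip[OF j0])
next
  fix i j assume "i < fst (a0 - 1, b0)" "j < snd (a1 - 1, b1)"
  then have "skip i0 i < a0" "j < b1" using i0 skip_less by auto
  then have "fst (snd d) i0 j = 0" "fst d (skip i0 i) j0 = 0" using row_X col_A by auto
  then show "fst (snd (mor_drop_A i0 j0 (mor_add (cmp (a0, b0) g d) (cmp (a1, b1) d h)))) i j =
    fst (snd (mor_add (cmp (a0 - 1, b0) (mor_drop_A i0 i0 g) (mor_drop_A i0 j0 d))
       (cmp (a1 - 1, b1) (mor_drop_A i0 j0 d) (mor_drop_A j0 j0 h)))) i j"
    unfolding mor_drop_A_def mor_add_def cmp_X by (simp add: sum_skip[OF i0] sum_skip[OF j0])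
qed (simp add: mor_drop_A_def mor_add_def cmp_k)

lemma cmp_drop_k:
  assumes i0: "i0 < b0" and j0: "j0 < b1"
    and row_k: "\<forall>j<b1. j \<noteq> j0 \<longrightarrow> snd (snd d) i0 j = 0" and col_X: "\<forall>i<a0. fst (snd d) i j0 = 0"
    and col_k: "\<forall>i<b0. i \<noteq> i0 \<longrightarrow> snd (snd d) i j0 = 0"
  shows "mor_eq (a1, b1 - 1) (a0, b0 - 1)
    (mor_drop_k i0 j0 (mor_add (cmp (a0, b0) g d) (cmp (a1, b1) d h)))
    (mor_add (cmp (a0, b0 - 1) (mor_drop_k i0 i0 g) (mor_drop_k i0 j0 d))
       (cmp (a1, b1 - 1) (mor_drop_k i0 j0 d) (mor_drop_k j0 j0 h)))"
  unfolding mor_eq_def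
proof (intro conjI allI impI)
  fix i j assume "i < fst (a0, b0 - 1)" "j < snd (a1, b1 - 1)"
  then have "i < a0" "skip j0 j < b1" using j0 skip_less by auto
  then have "snd (snd d) i0 (skip j0 j) = 0" "fst (snd d) i j0 = 0" using row_k col_X by auto
  then show "fst (snd (mor_drop_k i0 j0 (mor_add (cmp (a0, b0) g d) (cmp (a1, b1) d h)))) i j =
    fst (snd (mor_add (cmp (a0, b0 - 1) (mor_drop_k i0 i0 g) (mor_drop_k i0 j0 d))
       (cmp (a1, b1 - 1) (mor_drop_k i0 j0 d) (mor_drop_k j0 j0 h)))) i j"
    unfolding mor_drop_k_def mor_add_def cmp_X by (simp add: sum_skip[OF i0] sum_skip[OF j0] \<iota>_zero)
next
  fix i j assume "i < snd (a0, b0 - 1)" "j < snd (a1, b1 - 1)"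
  then have "skip i0 i < b0" "skip j0 j < b1" using i0 j0 skip_less by auto
  then have "snd (snd d) i0 (skip j0 j) = 0" "snd (snd d) (skip i0 i) j0 = 0" using row_k col_k by auto
  then show "snd (snd (mor_drop_k i0 j0 (mor_add (cmp (a0, b0) g d) (cmp (a1, b1) d h)))) i j =
    snd (snd (mor_add (cmp (a0, b0 - 1) (mor_drop_k i0 i0 g) (mor_drop_k i0 j0 d))
       (cmp (a1, b1 - 1) (mor_drop_k i0 j0 d) (mor_drop_k j0 j0 h)))) i j"
    unfolding mor_drop_k_def mor_add_def cmp_k by (simp add: sum_skip[OF i0] sum_skip[OF j0])
qed (simp add: mor_drop_k_def mor_add_def cmp_A)

text \<open>The hypotheses say that the complex is the direct sum of the complex obtained by deleting
  A-row i0 of the target and A-column j0 of the source, and of P1 \<rightarrow> P1; direct summands of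
  presilting complexes are presilting.\<close>

lemma presilting_drop_A:
  assumes P: "presilting sX actA UNIV (a0, b0) (a1, b1) d"
    and i0: "i0 < a0" and j0: "j0 < a1"
    and row_A: "\<forall>j<a1. j \<noteq> j0 \<longrightarrow> fst d i0 j = 0" and row_X: "\<forall>j<b1. fst (snd d) i0 j = 0"
    and col_A: "\<forall>i<a0. i \<noteq> i0 \<longrightarrow> fst d i j0 = 0"
  shows "presilting sX actA UNIV (a0 - 1, b0) (a1 - 1, b1) (mor_drop_A i0 j0 d)"
  unfolding presilting_UNIV_iff
proof
  fix f :: "('a,'x,'k) tmor"
  let ?f = "((\<lambda>i j. fst f (unskip i0 i) (unskip j0 j)), (\<lambda>i j. fst (snd f) (unskip i0 i) j), snd (snd f))"
  obtain g h where lift: "mor_eq (a1, b1) (a0, b0) ?f (mor_add (cmp (a0, b0) g d) (cmp (a1, b1) d h))"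
    using P unfolding presilting_UNIV_iff by blast
  have "mor_drop_A i0 j0 ?f = f" by (simp add: mor_drop_A_def)
  then have "mor_eq (a1 - 1, b1) (a0 - 1, b0) f
      (mor_drop_A i0 j0 (mor_add (cmp (a0, b0) g d) (cmp (a1, b1) d h)))"
    using mor_eq_drop_A[OF i0 j0 lift] by simp
  also note cmp_drop_A[OF i0 j0 row_A row_X col_A]
  finally show "\<exists>g h. mor_eq (a1 - 1, b1) (a0 - 1, b0) f
      (mor_add (cmp (a0 - 1, b0) g (mor_drop_A i0 j0 d)) (cmp (a1 - 1, b1) (mor_drop_A i0 j0 d) h))"
    by blast
qed

lemma presilting_drop_k:
  assumes P: "presilting sX actA UNIV (a0, b0) (a1, b1) d"
    and i0: "i0 < b0" and j0: "j0 < b1"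
    and row_k: "\<forall>j<b1. j \<noteq> j0 \<longrightarrow> snd (snd d) i0 j = 0" and col_X: "\<forall>i<a0. fst (snd d) i j0 = 0"
    and col_k: "\<forall>i<b0. i \<noteq> i0 \<longrightarrow> snd (snd d) i j0 = 0"
  shows "presilting sX actA UNIV (a0, b0 - 1) (a1, b1 - 1) (mor_drop_k i0 j0 d)"
  unfolding presilting_UNIV_iff
proof
  fix f :: "('a,'x,'k) tmor"
  let ?f = "(fst f, (\<lambda>i j. fst (snd f) i (unskip j0 j)), (\<lambda>i j. snd (snd f) (unskip i0 i) (unskip j0 j)))"
  obtain g h where lift: "mor_eq (a1, b1) (a0, b0) ?f (mor_add (cmp (a0, b0) g d) (cmp (a1, b1) d h))"
    using P unfolding presilting_UNIV_iff by blast
  have "mor_drop_k i0 j0 ?f = f" by (simp add: mor_drop_k_def)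
  then have "mor_eq (a1, b1 - 1) (a0, b0 - 1) f
      (mor_drop_k i0 j0 (mor_add (cmp (a0, b0) g d) (cmp (a1, b1) d h)))"
    using mor_eq_drop_k[OF i0 j0 lift] by simp
  also note cmp_drop_k[OF i0 j0 row_k col_X col_k]
  finally show "\<exists>g h. mor_eq (a1, b1 - 1) (a0, b0 - 1) f
      (mor_add (cmp (a0, b0 - 1) g (mor_drop_k i0 j0 d)) (cmp (a1, b1 - 1) (mor_drop_k i0 j0 d) h))"
    by blast
qed

lemma presilting_clear_column_A:
  assumes P: "presilting sX actA UNIV (a0, b0) (a1, b1) d"
    and i0: "i0 < a0" and vu: "v * fst d i0 j0 = 1"
  shows "\<exists>d'. presilting sX actA UNIV (a0, b0) (a1, b1) d' \<and>
    (\<forall>i<a0. i \<noteq> i0 \<longrightarrow> fst d' i j0 = 0) \<and>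
    (\<forall>j. fst d' i0 j = fst d i0 j) \<and> (\<forall>j. fst (snd d') i0 j = fst (snd d) i0 j)"
proof -
  define N :: "('a,'x,'k) tmor" where
    "N = ((\<lambda>i l. if l = i0 \<and> i \<noteq> i0 then - (fst d i j0 * v) else 0), (\<lambda>i l. 0), (\<lambda>i l. 0))"
  have "mor_eq (a0, b0) (a0, b0) (cmp (a0, b0) N N) mor_zero"
    unfolding mor_eq_def cmp_A cmp_X cmp_k N_def mor_zero_def by (auto simp: \<iota>_zero intro!: sum.neutral)
  then have "presilting sX actA UNIV (a0, b0) (a1, b1) (cmp (a0, b0) (mor_add mor_id N) d)"
    by (rule presilting_unipotent_comp[OF P])
  moreover have "fst (cmp (a0, b0) (mor_add mor_id N) d) i j =
      fst d i j + (if i \<noteq> i0 then - (fst d i j0 * v) * fst d i0 j else 0)" if "i < a0" for i j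
    unfolding cmp_A mor_add_def mor_id_def N_def using that i0
    by (simp add: distrib_right elementary_op_simps cong: if_cong)
  moreover have "fst (snd (cmp (a0, b0) (mor_add mor_id N) d)) i0 j = fst (snd d) i0 j" for j
    unfolding cmp_X mor_add_def mor_id_def N_def using i0
    by (simp add: act_add_left elementary_op_simps cong: if_cong)
  ultimately show ?thesis using i0 by (intro exI[of _ "cmp (a0, b0) (mor_add mor_id N) d"]) (simp add: mult.assoc vu)
qed

lemma presilting_clear_row_A:
  assumes P: "presilting sX actA UNIV (a0, b0) (a1, b1) d"
    and j0: "j0 < a1" and uv: "fst d i0 j0 * v = 1"
    and col_A: "\<forall>i<a0. i \<noteq> i0 \<longrightarrow> fst d i j0 = 0"
  shows "\<exists>d'. presilting sX actA UNIV (a0, b0) (a1, b1) d' \<and>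
    (\<forall>j<a1. j \<noteq> j0 \<longrightarrow> fst d' i0 j = 0) \<and> (\<forall>j<b1. fst (snd d') i0 j = 0) \<and>
    (\<forall>i<a0. i \<noteq> i0 \<longrightarrow> fst d' i j0 = 0)"
proof -
  define N :: "('a,'x,'k) tmor" where
    "N = ((\<lambda>l j. if l = j0 \<and> j \<noteq> j0 then - (v * fst d i0 j) else 0),
      (\<lambda>l j. if l = j0 then - actA v (fst (snd d) i0 j) else 0), (\<lambda>l j. 0))"
  have "mor_eq (a1, b1) (a1, b1) (cmp (a1, b1) N N) mor_zero"
    unfolding mor_eq_def cmp_A cmp_X cmp_k N_def mor_zero_def by (auto simp: \<iota>_zero intro!: sum.neutral)
  then have "presilting sX actA UNIV (a0, b0) (a1, b1) (cmp (a1, b1) d (mor_add mor_id N))"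
    by (rule presilting_comp_unipotent[OF P])
  moreover have "fst (cmp (a1, b1) d (mor_add mor_id N)) i j =
      fst d i j + (if j \<noteq> j0 then fst d i j0 * - (v * fst d i0 j) else 0)" if "j < a1" for i j
    unfolding cmp_A mor_add_def mor_id_def N_def using that j0
    by (simp add: distrib_left elementary_op_simps cong: if_cong)
  moreover have "fst (snd (cmp (a1, b1) d (mor_add mor_id N))) i j =
      actA (fst d i j0) (- actA v (fst (snd d) i0 j)) + fst (snd d) i j" if "j < b1" for i j
    unfolding cmp_X mor_add_def mor_id_def N_def using that j0
    by (simp add: act_add_left elementary_op_simps cong: if_cong)
  ultimately show ?thesis using j0 col_A
    by (intro exI[of _ "cmp (a1, b1) d (mor_add mor_id N)"])
      (simp add: mult.assoc[symmetric] uv act_uminus_right act_mult[symmetric] act_one)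
qed

lemma presilting_cancel_unit_entry:
  assumes P: "presilting sX actA UNIV (a0, b0) (a1, b1) d"
    and i0: "i0 < a0" and j0: "j0 < a1" and unit: "fst d i0 j0 \<notin> J"
  shows "\<exists>d'. presilting sX actA UNIV (a0 - 1, b0) (a1 - 1, b1) d'"
proof -
  obtain v where "v * fst d i0 j0 = 1" "fst d i0 j0 * v = 1"
    using invertible_if_not_in_jacobson[OF unit] by blast
  obtain d1 where P1: "presilting sX actA UNIV (a0, b0) (a1, b1) d1"
    and col_A: "\<forall>i<a0. i \<noteq> i0 \<longrightarrow> fst d1 i j0 = 0" and "fst d1 i0 j0 * v = 1"
    using presilting_clear_column_A[OF P i0 \<open>v * fst d i0 j0 = 1\<close>] \<open>fst d i0 j0 * v = 1\<close> by auto
  then obtain d2 where "presilting sX actA UNIV (a0, b0) (a1, b1) d2"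
    "\<forall>j<a1. j \<noteq> j0 \<longrightarrow> fst d2 i0 j = 0" "\<forall>j<b1. fst (snd d2) i0 j = 0"
    "\<forall>i<a0. i \<noteq> i0 \<longrightarrow> fst d2 i j0 = 0"
    using presilting_clear_row_A[OF P1 j0] by blast
  then show ?thesis using presilting_drop_A i0 j0 by blast
qed

lemma presilting_clear_column_k:
  assumes P: "presilting sX actA UNIV (a0, b0) (a1, b1) d"
    and i0: "i0 < b0" and c: "snd (snd d) i0 j0 \<noteq> 0"
  shows "\<exists>d'. presilting sX actA UNIV (a0, b0) (a1, b1) d' \<and>
    (\<forall>i<b0. i \<noteq> i0 \<longrightarrow> snd (snd d') i j0 = 0) \<and> (\<forall>i<a0. fst (snd d') i j0 = 0) \<and>
    (\<forall>j. snd (snd d') i0 j = snd (snd d) i0 j)"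
proof -
  define c where "c = snd (snd d) i0 j0"
  define N :: "('a,'x,'k) tmor" where "N = ((\<lambda>i l. 0),
      (\<lambda>i l. if l = i0 then - actA (\<iota> (1 / c)) (fst (snd d) i j0) else 0),
      (\<lambda>i l. if l = i0 \<and> i \<noteq> i0 then - (snd (snd d) i j0 / c) else 0))"
  have "mor_eq (a0, b0) (a0, b0) (cmp (a0, b0) N N) mor_zero"
    unfolding mor_eq_def cmp_A cmp_X cmp_k N_def mor_zero_def by (auto simp: \<iota>_zero intro!: sum.neutral)
  then have "presilting sX actA UNIV (a0, b0) (a1, b1) (cmp (a0, b0) (mor_add mor_id N) d)"
    by (rule presilting_unipotent_comp[OF P])
  moreover have "snd (snd (cmp (a0, b0) (mor_add mor_id N) d)) i j =
      snd (snd d) i j + (if i \<noteq> i0 then - (snd (snd d) i j0 / c) * snd (snd d) i0 j else 0)"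
    if "i < b0" for i j
    unfolding cmp_k mor_add_def mor_id_def N_def using that i0
    by (simp add: distrib_right elementary_op_simps cong: if_cong)
  moreover have "fst (snd (cmp (a0, b0) (mor_add mor_id N) d)) i j =
      fst (snd d) i j + actA (\<iota> (snd (snd d) i0 j)) (- actA (\<iota> (1 / c)) (fst (snd d) i j0))"
    if "i < a0" for i j
    unfolding cmp_X mor_add_def mor_id_def N_def using that i0
    by (simp add: act_add_left act_add_right elementary_op_simps cong: if_cong)
  ultimately show ?thesis using i0 c
    by (intro exI[of _ "cmp (a0, b0) (mor_add mor_id N) d"])
      (simp add: c_def act_uminus_right act_\<iota>_\<iota> \<iota>_one act_one)
qed

lemma presilting_clear_row_k:
  assumes P: "presilting sX actA UNIV (a0, b0) (a1, b1) d"
    and j0: "j0 < b1" and c: "snd (snd d) i0 j0 \<noteq> 0"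
    and col_k: "\<forall>i<b0. i \<noteq> i0 \<longrightarrow> snd (snd d) i j0 = 0" and col_X: "\<forall>i<a0. fst (snd d) i j0 = 0"
  shows "\<exists>d'. presilting sX actA UNIV (a0, b0) (a1, b1) d' \<and>
    (\<forall>j<b1. j \<noteq> j0 \<longrightarrow> snd (snd d') i0 j = 0) \<and> (\<forall>i<a0. fst (snd d') i j0 = 0) \<and>
    (\<forall>i<b0. i \<noteq> i0 \<longrightarrow> snd (snd d') i j0 = 0)"
proof -
  define c where "c = snd (snd d) i0 j0"
  define N :: "('a,'x,'k) tmor" where "N = ((\<lambda>l j. 0), (\<lambda>l j. 0),
      (\<lambda>l j. if l = j0 \<and> j \<noteq> j0 then - (snd (snd d) i0 j / c) else 0))"
  have "mor_eq (a1, b1) (a1, b1) (cmp (a1, b1) N N) mor_zero"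
    unfolding mor_eq_def cmp_A cmp_X cmp_k N_def mor_zero_def by (auto simp: \<iota>_zero intro!: sum.neutral)
  then have "presilting sX actA UNIV (a0, b0) (a1, b1) (cmp (a1, b1) d (mor_add mor_id N))"
    by (rule presilting_comp_unipotent[OF P])
  moreover have "snd (snd (cmp (a1, b1) d (mor_add mor_id N))) i j =
      snd (snd d) i j + (if j \<noteq> j0 then snd (snd d) i j0 * - (snd (snd d) i0 j / c) else 0)"
    if "j < b1" for i j
    unfolding cmp_k mor_add_def mor_id_def N_def using that j0
    by (simp add: distrib_left elementary_op_simps cong: if_cong)
  moreover have "fst (snd (cmp (a1, b1) d (mor_add mor_id N))) i j0 = fst (snd d) i j0" for i
    unfolding cmp_X mor_add_def mor_id_def N_def using j0
    by (simp add: act_add_left elementary_op_simps cong: if_cong)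
  ultimately show ?thesis using j0 c col_k col_X
    by (intro exI[of _ "cmp (a1, b1) d (mor_add mor_id N)"]) (simp add: c_def)
qed

lemma presilting_cancel_scalar_entry:
  assumes P: "presilting sX actA UNIV (a0, b0) (a1, b1) d"
    and i0: "i0 < b0" and j0: "j0 < b1" and c: "snd (snd d) i0 j0 \<noteq> 0"
  shows "\<exists>d'. presilting sX actA UNIV (a0, b0 - 1) (a1, b1 - 1) d'"
proof -
  obtain d1 where P1: "presilting sX actA UNIV (a0, b0) (a1, b1) d1"
    and "\<forall>i<b0. i \<noteq> i0 \<longrightarrow> snd (snd d1) i j0 = 0" "\<forall>i<a0. fst (snd d1) i j0 = 0"
    and "snd (snd d1) i0 j0 \<noteq> 0"
    using presilting_clear_column_k[OF P i0 c] c by auto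
  then obtain d2 where "presilting sX actA UNIV (a0, b0) (a1, b1) d2"
    "\<forall>j<b1. j \<noteq> j0 \<longrightarrow> snd (snd d2) i0 j = 0" "\<forall>i<a0. fst (snd d2) i j0 = 0"
    "\<forall>i<b0. i \<noteq> i0 \<longrightarrow> snd (snd d2) i j0 = 0"
    using presilting_clear_row_k[OF P1 j0] by blast
  then show ?thesis using presilting_drop_k i0 j0 by blast
qed


lemma presilting_radical_reduction:
  "presilting sX actA UNIV (a0, b0) (a1, b1) d \<Longrightarrow>
   \<exists>a0' b0' a1' b1' d'. presilting sX actA UNIV (a0', b0') (a1', b1') d' \<and>
     radical_mor (a1', b1') (a0', b0') d' \<and>
     int a0' - int a1' = int a0 - int a1 \<and> int b0' - int b1' = int b0 - int b1"
proof (induction "a0 + a1 + b0 + b1" arbitrary: a0 b0 a1 b1 d rule: less_induct)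
  case less
  show ?case
  proof (cases "radical_mor (a1, b1) (a0, b0) d")
    case True
    then show ?thesis using less.prems by blast
  next
    case False
    then consider (unit) i0 j0 where "i0 < a0" "j0 < a1" "fst d i0 j0 \<notin> J"
      | (scalar) i0 j0 where "i0 < b0" "j0 < b1" "snd (snd d) i0 j0 \<noteq> 0"
      unfolding radical_mor_def by auto
    then show ?thesis
    proof cases
      case unit
      obtain d' where "presilting sX actA UNIV (a0 - 1, b0) (a1 - 1, b1) d'"
        using presilting_cancel_unit_entry[OF less.prems unit] by blast
      from less.hyps[OF _ this] show ?thesis using unit by fastforce
    next
      case scalar
      obtain d' where "presilting sX actA UNIV (a0, b0 - 1) (a1, b1 - 1) d'"
        using presilting_cancel_scalar_entry[OF less.prems scalar] by blast
      from less.hyps[OF _ this] show ?thesis using scalar by fastforce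
    qed
  qed
qed

text \<open>If, say, both degrees contain P1, the morphism with all A-entries 1 cannot be null-homotopic,
  because every null-homotopic morphism has A-entries in J.\<close>

lemma radical_presilting_shape:
  assumes P: "presilting sX actA UNIV (a0, b0) (a1, b1) d"
    and radical: "radical_mor (a1, b1) (a0, b0) d"
  shows "(a0 = 0 \<or> a1 = 0) \<and> (b0 = 0 \<or> b1 = 0)"
proof (intro conjI; rule ccontr)
  assume "\<not> (a0 = 0 \<or> a1 = 0)"
  then have a: "0 < a0" "0 < a1" by auto
  obtain g h where "mor_eq (a1, b1) (a0, b0) ((\<lambda>i j. 1), (\<lambda>i j. 0), (\<lambda>i j. 0))
      (mor_add (cmp (a0, b0) g d) (cmp (a1, b1) d h))"
    using P unfolding presilting_UNIV_iff by blast
  then have "1 = (\<Sum>l<a0. fst g 0 l * fst d l 0) + (\<Sum>l<a1. fst d 0 l * fst h l 0)"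
    using a unfolding mor_eq_def mor_add_def cmp_A by simp
  moreover have "(\<Sum>l<a0. fst g 0 l * fst d l 0) + (\<Sum>l<a1. fst d 0 l * fst h l 0) \<in> J"
    using radical a unfolding radical_mor_def
    by (intro jacobson_add jacobson_sum jacobson_mult_left jacobson_mult_right) auto
  ultimately show False using one_not_in_jacobson by simp
next
  assume "\<not> (b0 = 0 \<or> b1 = 0)"
  then have b: "0 < b0" "0 < b1" by auto
  obtain g h where "mor_eq (a1, b1) (a0, b0) ((\<lambda>i j. 0), (\<lambda>i j. 0), (\<lambda>i j. 1))
      (mor_add (cmp (a0, b0) g d) (cmp (a1, b1) d h))"
    using P unfolding presilting_UNIV_iff by blast
  then have "(1::'k) = (\<Sum>l<b0. snd (snd g) 0 l * snd (snd d) l 0) + (\<Sum>l<b1. snd (snd d) 0 l * snd (snd h) l 0)"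
    using b unfolding mor_eq_def mor_add_def cmp_k by simp
  also have "\<dots> = 0"
    using radical b unfolding radical_mor_def by simp
  finally show False by simp
qed

end

section \<open>Complexes with differential P2^n \<rightarrow> P1\<close>

context local_bimodule
begin

text \<open>For y : P2^n \<rightarrow> P1, i.e. a tuple in X^n, and g \<in> End P1 = A, H \<in> End P2^n = k^(n \<times> n),
  this is the j-th entry of g \<circ> y + y \<circ> H.\<close>
definition htp_sum :: "nat \<Rightarrow> (nat \<Rightarrow> 'x) \<Rightarrow> 'a \<Rightarrow> (nat \<Rightarrow> nat \<Rightarrow> 'k) \<Rightarrow> nat \<Rightarrow> 'x" where
  "htp_sum n y g H j = actA g (y j) + (\<Sum>l<n. actA (\<iota> (H l j)) (y l))"

definition presilting_tuple :: "'x set \<Rightarrow> nat \<Rightarrow> (nat \<Rightarrow> 'x) \<Rightarrow> bool" where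
  "presilting_tuple M n y \<longleftrightarrow> (\<forall>j<n. y j \<in> M) \<and>
     (\<forall>z. (\<forall>j<n. z j \<in> M) \<longrightarrow> (\<exists>g H. \<forall>j<n. z j = htp_sum n y g H j))"

lemma presilting_tupleD:
  assumes "presilting_tuple M n y"
  shows "j < n \<Longrightarrow> y j \<in> M"
    and "(\<And>j. j < n \<Longrightarrow> z j \<in> M) \<Longrightarrow> \<exists>g H. \<forall>j<n. z j = htp_sum n y g H j"
  using assms unfolding presilting_tuple_def by blast+

lemma presilting_column_iff:
  "presilting sX actA M (1, 0) (0, n) d \<longleftrightarrow> presilting_tuple M n (\<lambda>j. fst (snd d) 0 j)"
proof
  assume P: "presilting sX actA M (1, 0) (0, n) d"
  show "presilting_tuple M n (\<lambda>j. fst (snd d) 0 j)" unfolding presilting_tuple_def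
  proof (intro conjI allI impI)
    show "fst (snd d) 0 j \<in> M" if "j < n" for j
      using P that unfolding presilting_def is_mor_def by simp
  next
    fix z assume "\<forall>j<n. z j \<in> M"
    then have "is_mor M (0, n) (1, 0) ((\<lambda>i j. 0), (\<lambda>i j. z j), (\<lambda>i j. 0))"
      unfolding is_mor_def by simp
    then obtain g h where "mor_eq (0, n) (1, 0) ((\<lambda>i j. 0), (\<lambda>i j. z j), (\<lambda>i j. 0))
        (mor_add (cmp (1, 0) g d) (cmp (0, n) d h))"
      using P unfolding presilting_def by blast
    then have "\<forall>j<n. z j = htp_sum n (\<lambda>j. fst (snd d) 0 j) (fst g 0 0) (snd (snd h)) j"
      unfolding mor_eq_def mor_add_def cmp_X htp_sum_def by simp
    then show "\<exists>g H. \<forall>j<n. z j = htp_sum n (\<lambda>j. fst (snd d) 0 j) g H j" by blast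
  qed
next
  assume T: "presilting_tuple M n (\<lambda>j. fst (snd d) 0 j)"
  show "presilting sX actA M (1, 0) (0, n) d" unfolding presilting_def
  proof (intro conjI allI impI)
    show "is_mor M (0, n) (1, 0) d" using presilting_tupleD(1)[OF T] unfolding is_mor_def by simp
    fix f :: "('a,'x,'k) tmor" assume "is_mor M (0, n) (1, 0) f"
    then have "\<forall>j<n. fst (snd f) 0 j \<in> M" unfolding is_mor_def by simp
    then obtain g H where "\<forall>j<n. fst (snd f) 0 j = htp_sum n (\<lambda>j. fst (snd d) 0 j) g H j"
      using presilting_tupleD(2)[OF T, of "\<lambda>j. fst (snd f) 0 j"] by auto
    then have "is_mor M (1, 0) (1, 0) ((\<lambda>i j. g), (\<lambda>i j. 0), (\<lambda>i j. 0)) \<and>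
        is_mor M (0, n) (0, n) ((\<lambda>i j. 0), (\<lambda>i j. 0), H) \<and>
        mor_eq (0, n) (1, 0) f (mor_add (cmp (1, 0) ((\<lambda>i j. g), (\<lambda>i j. 0), (\<lambda>i j. 0)) d)
          (cmp (0, n) d ((\<lambda>i j. 0), (\<lambda>i j. 0), H)))"
      unfolding is_mor_def mor_eq_def mor_add_def cmp_A cmp_X cmp_k htp_sum_def by simp
    then show "\<exists>g h. is_mor M (1, 0) (1, 0) g \<and> is_mor M (0, n) (0, n) h \<and>
        mor_eq (0, n) (1, 0) f (mor_add (cmp (1, 0) g d) (cmp (0, n) d h))"
      by blast
  qed
qed

lemma rigid_if_presilting_tuple:
  assumes "presilting_tuple M n y" shows "rigid sX actA M (1, - int n)"
proof -
  have "presilting sX actA M (1, 0) (0, n) ((\<lambda>i j. 0), (\<lambda>i j. y j), (\<lambda>i j. 0))"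
    by (rule presilting_column_iff[THEN iffD2]) (use assms in simp)
  then show ?thesis unfolding rigid_def by fastforce
qed

lemma presilting_tuple_if_rigid:
  assumes "rigid sX actA UNIV (1, - int n)" shows "\<exists>y. presilting_tuple UNIV n y"
proof -
  obtain a0 b0 a1 b1 d where P: "presilting sX actA UNIV (a0, b0) (a1, b1) d"
    and gvec: "int a0 - int a1 = 1" "int b0 - int b1 = - int n"
    using assms unfolding rigid_def by fastforce
  obtain a0' b0' a1' b1' d' where P': "presilting sX actA UNIV (a0', b0') (a1', b1') d'"
    and radical: "radical_mor (a1', b1') (a0', b0') d'"
    and gvec': "int a0' - int a1' = 1" "int b0' - int b1' = - int n"
    using presilting_radical_reduction[OF P] unfolding gvec by blast
  then have "a0' = 1" "a1' = 0" "b0' = 0" "b1' = n"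
    using radical_presilting_shape[OF P' radical] by auto
  with P' have "presilting sX actA UNIV (1, 0) (0, n) d'" by simp
  then show ?thesis unfolding presilting_column_iff by blast
qed

lemma cyclic_if_presilting_tuple:
  assumes "presilting_tuple UNIV 1 y" shows "\<exists>a. x = actA a (y 0)"
proof -
  obtain g H where "x = htp_sum 1 y g H 0"
    using presilting_tupleD(2)[OF assms, of "\<lambda>_. x"] by auto
  then have "x = actA (g + \<iota> (H 0 0)) (y 0)"
    unfolding htp_sum_def by (simp add: act_add_left)
  then show ?thesis by blast
qed


end

section \<open>Passing to the sub-bimodule J_A X\<close>

context local_bimodule
begin

lemma JX_act: "x \<in> JX actA \<Longrightarrow> actA a x \<in> JX actA"
proof (induction rule: JX.induct)
  case (JX_gen b x)
  then have "a * b \<in> J" by (rule jacobson_mult_left)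
  then show ?case by (simp add: act_mult[symmetric] JX.JX_gen)
qed (simp_all add: act_add_right JX.intros)

lemma JX_uminus: "x \<in> JX actA \<Longrightarrow> - x \<in> JX actA"
  using JX_act[of x "- 1"] by (simp add: act_uminus_left act_one)

lemma JX_diff: "x \<in> JX actA \<Longrightarrow> y \<in> JX actA \<Longrightarrow> x - y \<in> JX actA"
  using JX.JX_add[OF _ JX_uminus[of y]] by (simp add: diff_conv_add_uminus del: add_uminus_conv_diff)

lemma JX_sum: "(\<And>l. l < (n::nat) \<Longrightarrow> F l \<in> JX actA) \<Longrightarrow> (\<Sum>l<n. F l) \<in> JX actA"
  by (induct n) (auto intro: JX.JX_add JX.JX_zero)

lemma htp_sum_in_JX:
  assumes "\<And>l. l < n \<Longrightarrow> y l \<in> JX actA" and "j < n"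
  shows "htp_sum n y g H j \<in> JX actA"
  unfolding htp_sum_def using assms by (intro JX.JX_add JX_sum JX_act) auto

lemma JX_cyclic:
  assumes cyclic: "\<forall>x. \<exists>a. x = actA a e"
  shows "x \<in> JX actA \<Longrightarrow> \<exists>j\<in>J. x = actA j e"
proof (induction rule: JX.induct)
  case JX_zero
  show ?case using jacobson_0 by force
next
  case (JX_gen a x)
  obtain b where "x = actA b e" using cyclic by blast
  then have "actA a x = actA (a * b) e" by (simp add: act_mult)
  moreover have "a * b \<in> J" using JX_gen jacobson_mult_right by blast
  ultimately show ?case by blast
next
  case (JX_add u v)
  then obtain j1 j2 where "j1 \<in> J" "u = actA j1 e" "j2 \<in> J" "v = actA j2 e" by blast
  then have "u + v = actA (j1 + j2) e" "j1 + j2 \<in> J" using jacobson_add by (auto simp: act_add_left)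
  then show ?case by blast
qed

lemma cyclic_Nakayama:
  fixes x :: 'x
  assumes cyclic: "\<forall>x. \<exists>a. x = actA a e" and "e \<in> JX actA"
  shows "x = 0"
proof -
  obtain j where j: "j \<in> J" "e = actA j e" using JX_cyclic[OF assms] by blast
  have "1 - j \<notin> J"
    using jacobson_add[of "1 - j" j] j one_not_in_jacobson by auto
  then obtain w where w: "w * (1 - j) = 1" using invertible_if_not_in_jacobson by blast
  have "actA (1 - j) e = 0" using j by (simp add: act_diff_left act_one)
  then have "e = 0" using w by (metis act_mult act_one act_zero_right)
  then show ?thesis using cyclic by (metis act_zero_right)
qed

lemma cyclic_mod_JX:
  assumes cyclic: "\<forall>x. \<exists>a. x = actA a e"
  shows "\<exists>c. x - actA (\<iota> c) e \<in> JX actA"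
proof -
  obtain a where a: "x = actA a e" using cyclic by blast
  obtain c where "a - \<iota> c \<in> J" using residue_field unfolding residue_field_is_k_def by blast
  then have "actA (a - \<iota> c) e \<in> JX actA" by (rule JX.JX_gen)
  then show ?thesis unfolding a act_diff_left by blast
qed

lemma htp_sum_substitute:
  assumes zero_at_m: "actA g u + (\<Sum>l<n. actA (\<iota> (H l m)) (y l)) = 0"
    and y_eq: "\<And>l. y l = w l + actA (\<iota> (\<kappa> l)) u"
  shows "htp_sum n y g H i = htp_sum n w g (\<lambda>l j. H l j - H l m * \<kappa> j) i
    + actA (\<iota> ((\<Sum>l<n. H l i * \<kappa> l) - (\<Sum>l<n. H l m * \<kappa> l) * \<kappa> i)) u"
proof -
  have sum_split: "(\<Sum>l<n. actA (\<iota> (H l p)) (y l))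
      = (\<Sum>l<n. actA (\<iota> (H l p)) (w l)) + actA (\<iota> (\<Sum>l<n. H l p * \<kappa> l)) u" for p
    by (simp add: y_eq act_add_right sum.distrib act_\<iota>_\<iota> \<iota>_sum act_sum_left mult.commute)
  have g_u: "actA g u = - (\<Sum>l<n. actA (\<iota> (H l m)) (y l))"
    using zero_at_m by (simp add: eq_neg_iff_add_eq_0)
  have g_y: "actA g (y i) = actA g (w i) + actA (\<iota> (\<kappa> i)) (actA g u)"
    by (simp add: y_eq act_add_right act_\<iota>_commute)
  have scale_w: "actA (\<iota> (\<kappa> i)) (\<Sum>l<n. actA (\<iota> (H l m)) (w l))
      = (\<Sum>l<n. actA (\<iota> (H l m * \<kappa> i)) (w l))"
    by (simp add: act_sum_right act_\<iota>_\<iota> mult.commute)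
  have scale_u: "actA (\<iota> (\<kappa> i)) (actA (\<iota> (\<Sum>l<n. H l m * \<kappa> l)) u)
      = actA (\<iota> ((\<Sum>l<n. H l m * \<kappa> l) * \<kappa> i)) u"
    by (simp add: act_\<iota>_\<iota>)
  have diff_w: "(\<Sum>l<n. actA (\<iota> (H l i - H l m * \<kappa> i)) (w l)) =
     (\<Sum>l<n. actA (\<iota> (H l i)) (w l)) - (\<Sum>l<n. actA (\<iota> (H l m * \<kappa> i)) (w l))"
    by (simp add: \<iota>_diff act_diff_left sum_subtractf)
  have diff_u: "actA (\<iota> ((\<Sum>l<n. H l i * \<kappa> l) - (\<Sum>l<n. H l m * \<kappa> l) * \<kappa> i)) u =
     actA (\<iota> (\<Sum>l<n. H l i * \<kappa> l)) u - actA (\<iota> ((\<Sum>l<n. H l m * \<kappa> l) * \<kappa> i)) u"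
    by (simp only: \<iota>_diff act_diff_left)
  show ?thesis
    unfolding htp_sum_def g_y g_u sum_split[of m] sum_split[of i] diff_w diff_u act_uminus_right act_add_right
      scale_w scale_u
    by (simp add: algebra_simps)
qed


text \<open>Extend z by 0 at position m and write it as g y + y H. Substituting y_l = w_l + \<kappa>_l y_m,
  the remaining term in k y_m equals z minus an element of J_A X, so it vanishes.\<close>

lemma presilting_tuple_JX_drop:
  assumes T: "presilting_tuple UNIV n y" and m: "m < n"
    and w_JX: "\<And>l. w l \<in> JX actA" and w_m: "w m = 0"
    and y_eq: "\<And>l. y l = w l + actA (\<iota> (\<kappa> l)) (y m)"
    and k_line: "\<And>\<mu>. actA (\<iota> \<mu>) (y m) \<in> JX actA \<Longrightarrow> actA (\<iota> \<mu>) (y m) = 0"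
  shows "presilting_tuple (JX actA) (n - 1) (\<lambda>j. w (skip m j))"
  unfolding presilting_tuple_def
proof (intro conjI allI impI)
  show "w (skip m j) \<in> JX actA" if "j < n - 1" for j using w_JX .
next
  fix z assume z: "\<forall>j<n - 1. z j \<in> JX actA"
  define Z where "Z i = (if i = m then 0 else z (unskip m i))" for i
  obtain g H where gH: "\<forall>i<n. Z i = htp_sum n y g H i"
    using presilting_tupleD(2)[OF T, of Z] by auto
  have Z_m: "actA g (y m) + (\<Sum>l<n. actA (\<iota> (H l m)) (y l)) = 0"
    using gH m unfolding Z_def htp_sum_def by auto
  define H' where "H' l j = H (skip m l) (skip m j) - H (skip m l) m * \<kappa> (skip m j)" for l j
  have "z j = htp_sum (n - 1) (\<lambda>j. w (skip m j)) g H' j" if j: "j < n - 1" for j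
  proof -
    define i where "i = skip m j"
    have i: "i < n" "Z i = z j" unfolding i_def Z_def using skip_less[OF m j] by auto
    define \<mu> where "\<mu> = (\<Sum>l<n. H l i * \<kappa> l) - (\<Sum>l<n. H l m * \<kappa> l) * \<kappa> i"
    have "z j = htp_sum n y g H i" using gH i by simp
    also have "\<dots> = htp_sum n w g (\<lambda>l j. H l j - H l m * \<kappa> j) i + actA (\<iota> \<mu>) (y m)"
      unfolding \<mu>_def by (rule htp_sum_substitute[where u="y m" and n=n and H=H and m=m and \<kappa>=\<kappa>, OF Z_m y_eq])
    also have "htp_sum n w g (\<lambda>l j. H l j - H l m * \<kappa> j) i = htp_sum (n - 1) (\<lambda>j. w (skip m j)) g H' j"
      unfolding htp_sum_def sum_skip[OF m] w_m H'_def i_def by simp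
    finally have zj: "z j = htp_sum (n - 1) (\<lambda>j. w (skip m j)) g H' j + actA (\<iota> \<mu>) (y m)" .
    moreover have "htp_sum (n - 1) (\<lambda>j. w (skip m j)) g H' j \<in> JX actA"
      using w_JX j by (intro htp_sum_in_JX)
    ultimately have "actA (\<iota> \<mu>) (y m) \<in> JX actA"
      using z j JX_diff by (metis add_diff_cancel_left')
    then show ?thesis using zj k_line by simp
  qed
  then show "\<exists>g H. \<forall>j<n - 1. z j = htp_sum (n - 1) (\<lambda>j. w (skip m j)) g H j" by blast
qed

lemma presilting_tuple_JX:
  assumes cyclic: "\<forall>x. \<exists>a. x = actA a e"
    and T: "presilting_tuple UNIV n y" and n: "1 \<le> n"
  shows "\<exists>y'. presilting_tuple (JX actA) (n - 1) y'"
proof (cases "\<forall>l<n. y l \<in> JX actA")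
  case True
  obtain g H where "e = htp_sum n y g H 0"
    using presilting_tupleD(2)[OF T, of "\<lambda>_. e"] n by auto
  then have "e \<in> JX actA" using htp_sum_in_JX[of n y 0] True n by auto
  then have zero: "x = 0" for x :: 'x by (rule cyclic_Nakayama[OF cyclic])
  then have "z j = htp_sum (n - 1) (\<lambda>_. 0) 0 H j" for z j H by metis
  then show ?thesis unfolding presilting_tuple_def by (blast intro: exI[of _ "\<lambda>_. 0"] JX.JX_zero)
next
  case False
  then obtain m where m: "m < n" "y m \<notin> JX actA" by blast
  have "\<forall>l. \<exists>c. y l - actA (\<iota> c) e \<in> JX actA" using cyclic_mod_JX[OF cyclic] by blast
  then obtain c where c: "\<And>l. y l - actA (\<iota> (c l)) e \<in> JX actA" by metis
  have cm: "c m \<noteq> 0"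
  proof
    assume "c m = 0"
    then show False using c[of m] m by (simp add: \<iota>_zero)
  qed
  define \<kappa> where "\<kappa> l = c l / c m" for l
  define w where "w l = y l - actA (\<iota> (\<kappa> l)) (y m)" for l
  have "w l = (y l - actA (\<iota> (c l)) e) - actA (\<iota> (\<kappa> l)) (y m - actA (\<iota> (c m)) e)" for l
    unfolding w_def \<kappa>_def using cm by (simp add: act_diff_right act_\<iota>_\<iota>)
  then have w_JX: "w l \<in> JX actA" for l using c JX_diff JX_act by metis
  have w_m: "w m = 0" unfolding w_def \<kappa>_def using cm by (simp add: \<iota>_one act_one)
  have y_eq: "y l = w l + actA (\<iota> (\<kappa> l)) (y m)" for l unfolding w_def by simp
  have k_line: "actA (\<iota> \<mu>) (y m) = 0" if "actA (\<iota> \<mu>) (y m) \<in> JX actA" for \<mu>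
  proof (rule ccontr)
    assume "actA (\<iota> \<mu>) (y m) \<noteq> 0"
    then have "\<mu> \<noteq> 0" by (auto simp: \<iota>_zero)
    then have "y m = actA (\<iota> (1 / \<mu>)) (actA (\<iota> \<mu>) (y m))" by (simp add: act_\<iota>_\<iota> \<iota>_one act_one)
    then have "y m \<in> JX actA" using JX_act[OF that] by metis
    with m show False by simp
  qed
  show ?thesis using presilting_tuple_JX_drop[OF T m(1) w_JX w_m y_eq k_line] by blast
qed

end

theorem lemma3p15:
  fixes sA :: "'k::field \<Rightarrow> 'a::ring_1 \<Rightarrow> 'a"
    and sX :: "'k \<Rightarrow> 'x::ab_group_add \<Rightarrow> 'x"
    and actA :: "'a \<Rightarrow> 'x \<Rightarrow> 'x"
  assumes "k_algebra sA" and "fin_dim sA"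
    and "local_ring TYPE('a)" and "residue_field_is_k sA"
    and "bimodule sA sX actA" and "fin_dim sX"
    and "rigid sX actA UNIV (1, -1)"
  shows "(\<exists>h. \<forall>x. \<exists>a. x = actA a h) \<and>
         (\<forall>t::int. t \<ge> 1 \<longrightarrow> rigid sX actA UNIV (1, - t) \<longrightarrow> rigid sX actA (JX actA) (1, 1 - t))"
proof -
  interpret local_bimodule sA sX actA
    using assms by unfold_locales
  obtain y where "presilting_tuple UNIV 1 y"
    using presilting_tuple_if_rigid[of 1] assms(7) by auto
  then have cyclic: "\<forall>x. \<exists>a. x = actA a (y 0)"
    using cyclic_if_presilting_tuple by blast
  have "rigid sX actA (JX actA) (1, 1 - t)"
    if t_ge: "t \<ge> 1" and rigid_t: "rigid sX actA UNIV (1, - t)" for t :: int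
  proof -
    define n where "n = nat t"
    have t: "t = int n" "1 \<le> n" using t_ge unfolding n_def by auto
    obtain z where "presilting_tuple UNIV n z"
      using presilting_tuple_if_rigid rigid_t t by auto
    then obtain z' where "presilting_tuple (JX actA) (n - 1) z'"
      using presilting_tuple_JX[OF cyclic] t by blast
    then have "rigid sX actA (JX actA) (1, - int (n - 1))"
      by (rule rigid_if_presilting_tuple)
    then show ?thesis using t by simp
  qed
  then show ?thesis using cyclic by blast
qed

end
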